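(* Let $y=Fx+u\in\mathcal Y_N$. For any $v\in\mathcal Y_N$, $$\int_{-N}^NT^{\rm qnll}(y;x)\nabla v\,dx\le\tfrac12M^{(3,0)}\|\nabla u\|^2_{L^4(\Omega_{\rm l})}\|\nabla v\|_{L^2(\Omega_{\rm l})},$$ where $T^{\rm qnll}(y;x)=W_{\rm L}'(\nabla y(x))-W'(\nabla y(x))$ for $x\in\Omega_{\rm l}$ and $T^{\rm qnll}(y;x)=0$ otherwise.
   Context: One-dimensional lattice $\mathbb Z$, $F>0$. For a lattice function $w$, $\nabla w(x)=w(\xi)-w(\xi-1)$ for $x\in(\xi-1,\xi)$. $\mathcal Y_N=\{Fx+u: u:\mathbb Z\to\mathbb R,\ u(\xi)=0$ for $|\xi|\ge N\}$. $\mathcal R=\{\pm1,\pm2\}$, $V\in C^3(\mathbb R^{\mathcal R})$; $m(\boldsymbol\rho)=\prod_i|\rho_i|\sup_g|\partial_{\rho_1}\cdots\partial_{\rho_j}V(g)|$ for $\boldsymbol\rho\in\mathcal R^j$, $M^{(j,s)}=\sum_{\boldsymbol\rho\in\mathcal R^j}m(\boldsymbol\rho)|\boldsymbol\rho|_\infty^s$. $W(G)=V((G\rho)_{\rho\in\mathcal R})$; $W_{\rm L}(G)=W(F)+W'(F)(G-F)+\frac12W''(F)(G-F)^2$. $\Omega_{\rm l}=[-N,-L]\cup[L,N]$ for an integer $L<N$. $T^{\rm qnll}$ is the stress difference between the QNLL model (using $W_{\rm L}$ on $\Omega_{\rm l}$) and the QNL model (using $W$ there); they agree off $\Omega_{\rm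 l}$. *)

theory Defs
  imports "HOL-Analysis.Analysis"
begin

text \<open>Interaction range R = {-2,-1,1,2}; the space of site-potential arguments
  is R^R, represented as real^4 with coordinates indexed via rho_of / ridx.\<close>

definition Rset :: "int set" where
  "Rset = {-2, -1, 1, 2}"

definition rho_of :: "4 \<Rightarrow> int" where
  "rho_of i = (if i = 1 then -2 else if i = 2 then -1 else if i = 3 then 1 else 2)"

definition ridx :: "int \<Rightarrow> 4" where
  "ridx r = (if r = -2 then 1 else if r = -1 then 2 else if r = 1 then 3 else 4)"

definition partial :: "4 \<Rightarrow> (real^4 \<Rightarrow> real) \<Rightarrow> real^4 \<Rightarrow> real" where
  "partial i f g = deriv (\<lambda>t. f (g + t *\<^sub>R axis i 1)) 0"

definition has_partials :: "(real^4 \<Rightarrow> real) \<Rightarrow> bool" where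
  "has_partials f \<longleftrightarrow> (\<forall>i g. (\<lambda>t. f (g + t *\<^sub>R axis i 1)) differentiable (at 0))"

definition C3 :: "(real^4 \<Rightarrow> real) \<Rightarrow> bool" where
  "C3 f \<longleftrightarrow> continuous_on UNIV f \<and> has_partials f \<and>
     (\<forall>i. continuous_on UNIV (partial i f) \<and> has_partials (partial i f)) \<and>
     (\<forall>i j. continuous_on UNIV (partial j (partial i f)) \<and> has_partials (partial j (partial i f))) \<and>
     (\<forall>i j k. continuous_on UNIV (partial k (partial j (partial i f))))"

definition d3 :: "(real^4 \<Rightarrow> real) \<Rightarrow> int \<Rightarrow> int \<Rightarrow> int \<Rightarrow> real^4 \<Rightarrow> real" where
  "d3 V r1 r2 r3 = partial (ridx r1) (partial (ridx r2) (partial (ridx r3) V))"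

definition m3 :: "(real^4 \<Rightarrow> real) \<Rightarrow> int \<Rightarrow> int \<Rightarrow> int \<Rightarrow> real" where
  "m3 V r1 r2 r3 = \<bar>real_of_int (r1 * r2 * r3)\<bar> * (SUP g. \<bar>d3 V r1 r2 r3 g\<bar>)"

text \<open>M^(3,0) = sum over rho in R^3 of m(rho) |rho|_inf^0.\<close>
definition M30 :: "(real^4 \<Rightarrow> real) \<Rightarrow> real" where
  "M30 V = (\<Sum>r1\<in>Rset. \<Sum>r2\<in>Rset. \<Sum>r3\<in>Rset. m3 V r1 r2 r3)"

definition Wf :: "(real^4 \<Rightarrow> real) \<Rightarrow> real \<Rightarrow> real" where
  "Wf V G = V (\<chi> i. G * real_of_int (rho_of i))"

definition WL :: "(real^4 \<Rightarrow> real) \<Rightarrow> real \<Rightarrow> real \<Rightarrow> real" where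
  "WL V F G = Wf V F + deriv (Wf V) F * (G - F)
              + 1/2 * deriv (deriv (Wf V)) F * (G - F)^2"

text \<open>Piecewise constant gradient: for x in (xi-1, xi), grad w x = w xi - w (xi-1).
  (At integer points, a null set, the value of the left interval is used.)\<close>
definition grad :: "(int \<Rightarrow> real) \<Rightarrow> real \<Rightarrow> real" where
  "grad w x = w \<lceil>x\<rceil> - w (\<lceil>x\<rceil> - 1)"

definition YN :: "real \<Rightarrow> int \<Rightarrow> (int \<Rightarrow> real) set" where
  "YN F N = {y. \<exists>u. (\<forall>\<xi>. \<bar>\<xi>\<bar> \<ge> N \<longrightarrow> u \<xi> = 0) \<and> y = (\<lambda>\<xi>. F * real_of_int \<xi> + u \<xi>)}"

definition Omega_l :: "int \<Rightarrow> int \<Rightarrow> real set" where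
  "Omega_l N L = {real_of_int (-N) .. real_of_int (-L)} \<union> {real_of_int L .. real_of_int N}"

definition Tqnll :: "(real^4 \<Rightarrow> real) \<Rightarrow> real \<Rightarrow> int \<Rightarrow> int \<Rightarrow> (int \<Rightarrow> real) \<Rightarrow> real \<Rightarrow> real" where
  "Tqnll V F N L y x = (if x \<in> Omega_l N L
      then deriv (WL V F) (grad y x) - deriv (Wf V) (grad y x) else 0)"

definition Lp_norm :: "real \<Rightarrow> real set \<Rightarrow> (real \<Rightarrow> real) \<Rightarrow> real" where
  "Lp_norm p S f = (integral S (\<lambda>x. \<bar>f x\<bar> powr p)) powr (1/p)"

end

theory Submission
  imports Defs
begin

(* Since V has continuous partial derivatives up to order three, the chain rule along the ray
   t -> t rho gives W', W'' and W''' as sums of partial derivatives of V weighted by products of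
   the rho's, so |W'''| <= M30 V. As W_L'(G) = W'(F) + W''(F) (G - F), the difference
   W_L'(G) - W'(G) is minus the second order Taylor remainder of W' about F, hence bounded by
   M30 V / 2 * (G - F)^2. With G = F + grad u this bounds T^qnll pointwise by
   M30 V / 2 * (grad u)^2, and Cauchy-Schwarz on Omega_l (all integrands are step functions)
   gives the estimate. The bound is pointwise in x. *)

lemma has_real_derivative_partial:
  assumes "has_partials f"
  shows "((\<lambda>t. f (q + t *\<^sub>R axis k 1)) has_real_derivative partial k f (q + t *\<^sub>R axis k 1)) (at t)"
proof -
  let ?p = "q + t *\<^sub>R axis k 1"
  have "(\<lambda>s. f (?p + s *\<^sub>R axis k 1)) differentiable (at 0)"
    using assms unfolding has_partials_def by blast
  then have "((\<lambda>s. f (?p + s *\<^sub>R axis k 1)) has_real_derivative partial k f ?p) (at 0)"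
    unfolding partial_def using DERIV_deriv_iff_real_differentiable by blast
  moreover have "(\<lambda>s. f (?p + s *\<^sub>R axis k 1)) = (\<lambda>s. f (q + (s + t) *\<^sub>R axis k 1))"
    by (simp add: algebra_simps scaleR_add_left)
  ultimately show ?thesis
    using DERIV_shift[of "\<lambda>s. f (q + s *\<^sub>R axis k 1)" _ 0 t] by simp
qed

lemma partial_increment_le:
  assumes "has_partials f" and "isCont (partial k f) g" and "e > 0"
  shows "\<forall>\<^sub>F (q, s) in nhds (g, 0).
           \<bar>f (q + s *\<^sub>R axis k 1) - f q - s * partial k f g\<bar> \<le> e * \<bar>s\<bar>"
proof -
  obtain \<delta>' where "\<delta>' > 0" and \<delta>': "\<And>x. dist x g < \<delta>' \<Longrightarrow> \<bar>partial k f x - partial k f g\<bar> < e"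
    using assms(2,3) unfolding continuous_at_eps_delta dist_real_def by blast
  define \<delta> where "\<delta> = \<delta>' / 2"
  have "\<delta> > 0" and \<delta>: "\<And>x. dist x g < 2 * \<delta> \<Longrightarrow> \<bar>partial k f x - partial k f g\<bar> < e"
    using \<open>\<delta>' > 0\<close> \<delta>' by (simp_all add: \<delta>_def)
  have bound: "\<bar>f (q + s *\<^sub>R axis k 1) - f q - s * partial k f g\<bar> \<le> e * \<bar>s\<bar>"
    if "norm (q - g) < \<delta>" and "\<bar>s\<bar> < \<delta>" for q s
  proof -
    let ?D = "\<lambda>t. partial k f (q + t *\<^sub>R axis k 1) - partial k f g"
    have "((\<lambda>t. f (q + t *\<^sub>R axis k 1) - t * partial k f g) has_real_derivative ?D t) (at t within ball 0 \<delta>)"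
      for t
      by (rule has_field_derivative_at_within, rule DERIV_diff[OF has_real_derivative_partial[OF assms(1)]])
        (auto intro!: derivative_eq_intros)
    moreover have "norm (?D t) \<le> e" if "t \<in> ball 0 \<delta>" for t
    proof -
      have "dist (q + t *\<^sub>R axis k 1) g \<le> norm (q - g) + \<bar>t\<bar>"
        using norm_triangle_ineq[of "q - g" "t *\<^sub>R axis k 1"] by (simp add: dist_norm algebra_simps)
      with that \<open>norm (q - g) < \<delta>\<close> show ?thesis
        using \<delta>[of "q + t *\<^sub>R axis k 1"] by simp
    qed
    ultimately have "norm ((f (q + s *\<^sub>R axis k 1) - s * partial k f g) - (f (q + 0 *\<^sub>R axis k 1) - 0 * partial k f g))
        \<le> e * norm (s - 0)"
      by (intro field_differentiable_bound[of "ball 0 \<delta>"]) (use \<open>\<bar>s\<bar> < \<delta>\<close> \<open>\<delta> > 0\<close> in auto)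
    then show ?thesis by (simp add: algebra_simps)
  qed
  then show ?thesis
    unfolding eventually_nhds_metric
  proof (intro exI[of _ \<delta>] conjI allI impI)
    fix x :: "(real^4) \<times> real" assume "dist x (g, 0) < \<delta>"
    then have "norm (fst x - g) < \<delta>" and "\<bar>snd x\<bar> < \<delta>"
      using dist_fst_le[of x "(g, 0)"] dist_snd_le[of x "(g, 0)"] by (simp_all add: dist_norm)
    with bound show "case x of (q, s) \<Rightarrow> \<bar>f (q + s *\<^sub>R axis k 1) - f q - s * partial k f g\<bar> \<le> e * \<bar>s\<bar>"
      by (simp add: case_prod_beta)
  qed (rule \<open>\<delta> > 0\<close>)
qed

(* The step along axis i starts from the moved point q + s P, which is why the estimate has to be
   uniform in the base point q near g. *)
lemma increment_along_axes_le:
  fixes f :: "real^4 \<Rightarrow> real" and I :: "4 set"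
  assumes hp: "has_partials f" and cont: "\<And>i. isCont (partial i f) g" and "finite I" and "e > 0"
  shows "\<forall>\<^sub>F (q, s) in nhds (g, 0). \<bar>f (q + s *\<^sub>R (\<Sum>i\<in>I. d$i *\<^sub>R axis i 1)) - f q
           - s * (\<Sum>i\<in>I. d$i * partial i f g)\<bar> \<le> e * \<bar>s\<bar>"
  using \<open>finite I\<close> \<open>e > 0\<close>
proof (induction I arbitrary: e rule: finite_induct)
  case empty
  then show ?case by simp
next
  case (insert i I)
  let ?P = "\<Sum>j\<in>I. d$j *\<^sub>R axis j (1::real)" and ?c = "\<Sum>j\<in>I. d$j * partial j f g"
  define e' where "e' = e / (2 * (\<bar>d$i\<bar> + 1))"
  have "e' > 0" using insert.prems by (simp add: e'_def)
  have "((\<lambda>x. (fst x + snd x *\<^sub>R ?P, snd x * d$i)) \<longlongrightarrow> (g, 0)) (nhds (g, 0))"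
    by (auto intro!: tendsto_eq_intros filterlim_ident)
  from eventually_compose_filterlim[OF partial_increment_le[OF hp cont[of i] \<open>e' > 0\<close>] this]
  have step_i: "\<forall>\<^sub>F (q, s) in nhds (g, 0). \<bar>f (q + s *\<^sub>R ?P + (s * d$i) *\<^sub>R axis i 1) - f (q + s *\<^sub>R ?P)
      - s * d$i * partial i f g\<bar> \<le> e' * \<bar>s * d$i\<bar>"
    by (simp add: case_prod_beta')
  have step_I: "\<forall>\<^sub>F (q, s) in nhds (g, 0). \<bar>f (q + s *\<^sub>R ?P) - f q - s * ?c\<bar> \<le> e / 2 * \<bar>s\<bar>"
    using insert.IH[of "e / 2"] insert.prems by simp
  have e'_le: "e' * \<bar>s * d$i\<bar> \<le> e / 2 * \<bar>s\<bar>" for s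
  proof -
    have "e' * \<bar>s * d$i\<bar> = e / 2 * \<bar>s\<bar> * (\<bar>d$i\<bar> / (\<bar>d$i\<bar> + 1))"
      by (simp add: e'_def abs_mult field_simps)
    also have "\<dots> \<le> e / 2 * \<bar>s\<bar>"
      using insert.prems by (intro mult_left_le) auto
    finally show ?thesis .
  qed
  show ?case
    using eventually_conj[OF step_i step_I]
  proof (rule eventually_mono, clarify)
    fix q s
    let ?A = "f (q + s *\<^sub>R ?P + (s * d$i) *\<^sub>R axis i 1) - f (q + s *\<^sub>R ?P) - s * d$i * partial i f g"
      and ?B = "f (q + s *\<^sub>R ?P) - f q - s * ?c"
    assume "\<bar>?A\<bar> \<le> e' * \<bar>s * d$i\<bar>" and "\<bar>?B\<bar> \<le> e / 2 * \<bar>s\<bar>"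
    moreover have "q + s *\<^sub>R (\<Sum>j\<in>insert i I. d$j *\<^sub>R axis j 1) = q + s *\<^sub>R ?P + (s * d$i) *\<^sub>R axis i 1"
      using insert.hyps by (simp add: scaleR_add_right)
    then have "f (q + s *\<^sub>R (\<Sum>j\<in>insert i I. d$j *\<^sub>R axis j 1)) - f q
        - s * (\<Sum>j\<in>insert i I. d$j * partial j f g) = ?A + ?B"
      using insert.hyps by (simp add: distrib_left add.assoc)
    ultimately show "\<bar>f (q + s *\<^sub>R (\<Sum>j\<in>insert i I. d$j *\<^sub>R axis j 1)) - f q
        - s * (\<Sum>j\<in>insert i I. d$j * partial j f g)\<bar> \<le> e * \<bar>s\<bar>"
      using abs_triangle_ineq[of ?A ?B] e'_le[of s] by linarith
  qed
qed

lemma has_real_derivative_along_ray: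
  fixes f :: "real^4 \<Rightarrow> real"
  assumes hp: "has_partials f" and cont: "\<And>i. continuous_on UNIV (partial i f)"
  shows "((\<lambda>t. f (t *\<^sub>R d)) has_real_derivative (\<Sum>i\<in>UNIV. d$i * partial i f (t *\<^sub>R d))) (at t)"
  unfolding DERIV_def tendsto_iff
proof (intro allI impI)
  fix r :: real assume "r > 0"
  let ?g = "t *\<^sub>R d" and ?D = "\<Sum>i\<in>UNIV. d$i * partial i f (t *\<^sub>R d)"
  have "\<And>i. isCont (partial i f) ?g"
    using cont by (simp add: continuous_on_eq_continuous_at)
  moreover have "(\<Sum>i\<in>UNIV. d$i *\<^sub>R axis i 1) = d"
    using basis_expansion[of d] by (simp add: scalar_mult_eq_scaleR)
  moreover have "r / 2 > 0" using \<open>r > 0\<close> by simp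
  ultimately have "\<forall>\<^sub>F (q, s) in nhds (?g, 0). \<bar>f (q + s *\<^sub>R d) - f q - s * ?D\<bar> \<le> r / 2 * \<bar>s\<bar>"
    using increment_along_axes_le[OF hp _ finite_class.finite_UNIV, of ?g "r / 2" d] by simp
  moreover have "((\<lambda>s. (?g, s)) \<longlongrightarrow> (?g, 0)) (nhds 0)"
    by (intro tendsto_intros filterlim_ident)
  ultimately have "\<forall>\<^sub>F s in nhds 0. \<bar>f (?g + s *\<^sub>R d) - f ?g - s * ?D\<bar> \<le> r / 2 * \<bar>s\<bar>"
    using eventually_compose_filterlim by fastforce
  then show "\<forall>\<^sub>F s in at 0. dist ((f ((t + s) *\<^sub>R d) - f ?g) / s) ?D < r"
    unfolding eventually_at_filter
  proof (rule eventually_mono, intro impI)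
    fix s :: real
    assume "s \<noteq> 0" and bound: "\<bar>f (?g + s *\<^sub>R d) - f ?g - s * ?D\<bar> \<le> r / 2 * \<bar>s\<bar>"
    have "dist ((f ((t + s) *\<^sub>R d) - f ?g) / s) ?D = \<bar>f (?g + s *\<^sub>R d) - f ?g - s * ?D\<bar> / \<bar>s\<bar>"
      using \<open>s \<noteq> 0\<close> by (simp add: dist_real_def scaleR_add_left abs_divide[symmetric] diff_divide_distrib)
    also have "\<dots> \<le> r / 2"
      using bound \<open>s \<noteq> 0\<close> by (simp add: divide_le_eq)
    finally show "dist ((f ((t + s) *\<^sub>R d) - f ?g) / s) ?D < r"
      using \<open>r > 0\<close> by simp
  qed
qed

definition rho_vec :: "real^4" where
  "rho_vec = (\<chi> i. real_of_int (rho_of i))"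

definition Wf' :: "(real^4 \<Rightarrow> real) \<Rightarrow> real \<Rightarrow> real" where
  "Wf' V t = (\<Sum>i\<in>UNIV. rho_vec$i * partial i V (t *\<^sub>R rho_vec))"

definition Wf'' :: "(real^4 \<Rightarrow> real) \<Rightarrow> real \<Rightarrow> real" where
  "Wf'' V t = (\<Sum>i\<in>UNIV. rho_vec$i * (\<Sum>j\<in>UNIV. rho_vec$j * partial j (partial i V) (t *\<^sub>R rho_vec)))"

definition Wf''' :: "(real^4 \<Rightarrow> real) \<Rightarrow> real \<Rightarrow> real" where
  "Wf''' V t = (\<Sum>i\<in>UNIV. rho_vec$i * (\<Sum>j\<in>UNIV. rho_vec$j *
     (\<Sum>k\<in>UNIV. rho_vec$k * partial k (partial j (partial i V)) (t *\<^sub>R rho_vec))))"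

lemma Wf_eq: "Wf V t = V (t *\<^sub>R rho_vec)"
  unfolding Wf_def rho_vec_def by (rule arg_cong[where f = V]) (simp add: vec_eq_iff)

lemma Wf_has_derivatives:
  assumes "C3 V"
  shows "(Wf V has_real_derivative Wf' V t) (at t)"
    and "(Wf' V has_real_derivative Wf'' V t) (at t)"
    and "(Wf'' V has_real_derivative Wf''' V t) (at t)"
proof -
  have h0: "has_partials V" "\<And>i. continuous_on UNIV (partial i V)"
    and h1: "\<And>i. has_partials (partial i V)" "\<And>i j. continuous_on UNIV (partial j (partial i V))"
    and h2: "\<And>i j. has_partials (partial j (partial i V))"
      "\<And>i j k. continuous_on UNIV (partial k (partial j (partial i V)))"
    using assms unfolding C3_def by blast+
  show "(Wf V has_real_derivative Wf' V t) (at t)"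
    unfolding Wf_eq[abs_def] Wf'_def using has_real_derivative_along_ray[OF h0] by simp
  show "(Wf' V has_real_derivative Wf'' V t) (at t)"
    unfolding Wf'_def[abs_def] Wf''_def by (intro DERIV_sum DERIV_cmult has_real_derivative_along_ray h1)
  show "(Wf'' V has_real_derivative Wf''' V t) (at t)"
    unfolding Wf''_def[abs_def] Wf'''_def by (intro DERIV_sum DERIV_cmult has_real_derivative_along_ray h2)
qed

lemma deriv_Wf: "C3 V \<Longrightarrow> deriv (Wf V) = Wf' V"
  by (intro ext DERIV_imp_deriv Wf_has_derivatives(1))

lemma deriv_Wf': "C3 V \<Longrightarrow> deriv (Wf' V) = Wf'' V"
  by (intro ext DERIV_imp_deriv Wf_has_derivatives(2))

lemma deriv_WL:
  assumes "C3 V"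
  shows "deriv (WL V F) G = Wf' V F + Wf'' V F * (G - F)"
proof -
  have "WL V F = (\<lambda>G. Wf V F + Wf' V F * (G - F) + 1/2 * Wf'' V F * (G - F)^2)"
    unfolding WL_def[abs_def] deriv_Wf[OF assms] deriv_Wf'[OF assms] by simp
  moreover have "((\<lambda>G. Wf V F + Wf' V F * (G - F) + 1/2 * Wf'' V F * (G - F)^2) has_real_derivative
      Wf' V F + Wf'' V F * (G - F)) (at G)"
    by (auto intro!: derivative_eq_intros)
  ultimately show ?thesis using DERIV_imp_deriv by metis
qed

lemma ridx_rho_of [simp]: "ridx (rho_of i) = i"
  using exhaust_4[of i] by (auto simp: ridx_def rho_of_def)

lemma sum_Rset_reindex: "(\<Sum>r\<in>Rset. h r) = (\<Sum>i\<in>UNIV. h (rho_of i))"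
proof -
  have "Rset = rho_of ` UNIV"
    unfolding UNIV_4 Rset_def by (auto simp: rho_of_def)
  moreover have "inj rho_of" by (metis injI ridx_rho_of)
  ultimately show ?thesis using sum.reindex[of rho_of UNIV h] by simp
qed

lemma abs_Wf'''_le_M30:
  assumes V_bdd: "\<And>r1 r2 r3. bdd_above (range (\<lambda>g. \<bar>d3 V r1 r2 r3 g\<bar>))"
  shows "\<bar>Wf''' V t\<bar> \<le> M30 V"
proof -
  let ?P = "\<lambda>i j k. partial k (partial j (partial i V)) (t *\<^sub>R rho_vec)"
  let ?m = "\<lambda>i j k. m3 V (rho_of k) (rho_of j) (rho_of i)"
  have term_le: "\<bar>rho_vec$i * (rho_vec$j * (rho_vec$k * ?P i j k))\<bar> \<le> ?m i j k" for i j k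
  proof -
    have "\<bar>?P i j k\<bar> \<le> (SUP g. \<bar>d3 V (rho_of k) (rho_of j) (rho_of i) g\<bar>)"
      using cSUP_upper[OF UNIV_I V_bdd[of "rho_of k" "rho_of j" "rho_of i"]] by (simp add: d3_def)
    then have "\<bar>real_of_int (rho_of k * rho_of j * rho_of i)\<bar> * \<bar>?P i j k\<bar> \<le> ?m i j k"
      unfolding m3_def by (rule mult_left_mono) simp
    then show ?thesis
      unfolding rho_vec_def by (simp add: abs_mult mult_ac)
  qed
  have "\<bar>Wf''' V t\<bar> \<le> (\<Sum>i\<in>UNIV. \<Sum>j\<in>UNIV. \<Sum>k\<in>UNIV. ?m i j k)"
    unfolding Wf'''_def sum_distrib_left
    by (intro order_trans[OF sum_abs] sum_mono term_le)
  also have "\<dots> = M30 V"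
    unfolding M30_def sum_Rset_reindex
    by (subst sum.swap, subst (2) sum.swap, subst sum.swap) (rule refl)
  finally show ?thesis .
qed

lemma M30_nonneg:
  assumes "\<And>r1 r2 r3. bdd_above (range (\<lambda>g. \<bar>d3 V r1 r2 r3 g\<bar>))"
  shows "M30 V \<ge> 0"
proof -
  have "m3 V r1 r2 r3 \<ge> 0" for r1 r2 r3
    using cSUP_upper[OF UNIV_I assms, of r1 r2 r3 0] abs_ge_zero[of "d3 V r1 r2 r3 0"]
    unfolding m3_def by (intro mult_nonneg_nonneg abs_ge_zero) linarith
  then show ?thesis unfolding M30_def by (simp add: sum_nonneg)
qed

lemma abs_deriv_WL_minus_deriv_Wf_le:
  assumes "C3 V" and "\<And>r1 r2 r3. bdd_above (range (\<lambda>g. \<bar>d3 V r1 r2 r3 g\<bar>))"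
  shows "\<bar>deriv (WL V F) G - deriv (Wf V) G\<bar> \<le> 1/2 * M30 V * (G - F)^2"
proof (cases "G = F")
  case True
  then show ?thesis by (simp add: deriv_WL[OF assms(1)] deriv_Wf[OF assms(1)])
next
  case False
  define D where "D m = (if m = 0 then Wf' V else if m = 1 then Wf'' V else Wf''' V)" for m :: nat
  have "\<forall>m t. m < 2 \<and> min F G \<le> t \<and> t \<le> max F G \<longrightarrow> (D m has_real_derivative D (Suc m) t) (at t)"
    unfolding D_def using Wf_has_derivatives[OF assms(1)] by (auto simp: less_2_cases_iff)
  from Taylor[of 2 D "Wf' V" "min F G" "max F G" F G, OF _ _ this] False
  obtain t where "Wf' V G = (\<Sum>m<2. D m F / fact m * (G - F)^m) + D 2 t / fact 2 * (G - F)^2"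
    by (auto simp: D_def)
  then have "deriv (WL V F) G - deriv (Wf V) G = - (Wf''' V t / 2 * (G - F)^2)"
    by (simp add: deriv_WL[OF assms(1)] deriv_Wf[OF assms(1)] D_def numeral_2_eq_2)
  then have "\<bar>deriv (WL V F) G - deriv (Wf V) G\<bar> = \<bar>Wf''' V t\<bar> / 2 * (G - F)^2"
    by (simp add: abs_mult)
  also have "\<dots> \<le> M30 V / 2 * (G - F)^2"
    using abs_Wf'''_le_M30[OF assms(2)] by (intro mult_right_mono) auto
  finally show ?thesis by simp
qed

lemma integrable_on_ceiling_step:
  fixes \<phi> :: "int \<Rightarrow> real" and S :: "real set"
  assumes "bounded S" and "S \<in> sets lebesgue"
  shows "(\<lambda>x. \<phi> \<lceil>x\<rceil>) integrable_on S"
proof -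
  obtain R where R: "\<And>x. x \<in> S \<Longrightarrow> \<bar>x\<bar> \<le> R"
    using \<open>bounded S\<close> bounded_iff by fastforce
  define c where "c = (\<Sum>k\<in>{-\<lceil>R\<rceil>-1..\<lceil>R\<rceil>+1}. \<bar>\<phi> k\<bar>)"
  have "(\<lambda>x::real. \<phi> \<lceil>x\<rceil>) \<in> borel_measurable borel"
    by measurable
  from measurable_compose[OF id_borel_measurable_lebesgue_on[of S] this]
  have "(\<lambda>x. \<phi> \<lceil>x\<rceil>) \<in> borel_measurable (lebesgue_on S)" by simp
  then show ?thesis
  proof (rule measurable_bounded_by_integrable_imp_integrable[OF _ _ _ \<open>S \<in> sets lebesgue\<close>])
    show "(\<lambda>x. c) integrable_on S"
      using assms by (intro integrable_on_const bounded_set_imp_lmeasurable)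
    fix x assume "x \<in> S"
    then have "\<lceil>x\<rceil> \<in> {-\<lceil>R\<rceil>-1..\<lceil>R\<rceil>+1}"
      using R[of x] by (auto, linarith+)
    then show "norm (\<phi> \<lceil>x\<rceil>) \<le> c"
      unfolding c_def using member_le_sum[of "\<lceil>x\<rceil>" _ "\<lambda>k. \<bar>\<phi> k\<bar>"] by simp
  qed
qed

lemma integrable_on_grad:
  fixes h :: "real \<Rightarrow> real \<Rightarrow> real"
  assumes "bounded S" and "S \<in> sets lebesgue"
  shows "(\<lambda>x. h (grad u x) (grad v x)) integrable_on S"
  unfolding grad_def
  using integrable_on_ceiling_step[OF assms, of "\<lambda>k. h (u k - u (k - 1)) (v k - v (k - 1))"] by simp

lemma grad_add_affine: "grad (\<lambda>\<xi>. F * real_of_int \<xi> + u \<xi>) x = F + grad u x"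
  unfolding grad_def by (simp add: algebra_simps)

lemma le_sqrt_mult_sqrtI:
  fixes A B C :: real
  assumes "A \<ge> 0" and "B \<ge> 0" and AM_GM: "\<And>l. l > 0 \<Longrightarrow> C \<le> (l * A + B / l) / 2"
  shows "C \<le> sqrt A * sqrt B"
proof (cases "A > 0 \<and> B > 0")
  case True
  then have "sqrt B / sqrt A * A = sqrt A * sqrt B" and "B / (sqrt B / sqrt A) = sqrt A * sqrt B"
    by (simp_all add: field_simps)
  then show ?thesis
    using AM_GM[of "sqrt B / sqrt A"] True by simp
next
  case False
  with assms have "sqrt A * sqrt B = 0" by auto
  moreover have "C \<le> 0"
  proof (rule ccontr)
    assume "\<not> C \<le> 0"
    then have "C \<ge> 0" by simp
    show False
    proof (cases "A = 0")
      case True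
      then show False
        using AM_GM[of "(B + 1) / C"] \<open>\<not> C \<le> 0\<close> \<open>B \<ge> 0\<close> mult_nonneg_nonneg[OF \<open>B \<ge> 0\<close> \<open>C \<ge> 0\<close>]
        by (simp add: field_simps)
    next
      case False
      with \<open>\<not> (A > 0 \<and> B > 0)\<close> \<open>A \<ge> 0\<close> \<open>B \<ge> 0\<close> have "B = 0" by simp
      then show False
        using AM_GM[of "C / (A + 1)"] \<open>\<not> C \<le> 0\<close> \<open>A \<ge> 0\<close> mult_nonneg_nonneg[OF \<open>A \<ge> 0\<close> \<open>C \<ge> 0\<close>]
        by (simp add: field_simps)
    qed
  qed
  ultimately show ?thesis by linarith
qed

lemma Cauchy_Schwarz_integral:
  fixes f g :: "'a::euclidean_space \<Rightarrow> real"
  assumes fg: "(\<lambda>x. f x * g x) integrable_on S"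
    and f2: "(\<lambda>x. (f x)^2) integrable_on S" and g2: "(\<lambda>x. (g x)^2) integrable_on S"
  shows "integral S (\<lambda>x. f x * g x) \<le> sqrt (integral S (\<lambda>x. (f x)^2)) * sqrt (integral S (\<lambda>x. (g x)^2))"
proof (rule le_sqrt_mult_sqrtI)
  show "integral S (\<lambda>x. (f x)^2) \<ge> 0" and "integral S (\<lambda>x. (g x)^2) \<ge> 0"
    using f2 g2 by (simp_all add: integral_nonneg)
  fix l :: real assume "l > 0"
  have "f x * g x \<le> (l * (f x)^2 + (g x)^2 / l) / 2" for x
  proof -
    have "0 \<le> (l * f x - g x)^2 / l" using \<open>l > 0\<close> by simp
    also have "\<dots> = l * (f x)^2 + (g x)^2 / l - 2 * (f x * g x)"
      using \<open>l > 0\<close> by (simp add: field_simps power2_eq_square)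
    finally show ?thesis by simp
  qed
  moreover have "(\<lambda>x. (l * (f x)^2 + (g x)^2 / l) / 2) integrable_on S"
    using integrable_on_cmult_left[OF f2, of l] integrable_on_divide[OF g2, of l]
    by (intro integrable_on_divide integrable_add) (simp_all add: g2)
  ultimately have "integral S (\<lambda>x. f x * g x) \<le> integral S (\<lambda>x. (l * (f x)^2 + (g x)^2 / l) / 2)"
    by (intro integral_le fg)
  also have "\<dots> = (l * integral S (\<lambda>x. (f x)^2) + integral S (\<lambda>x. (g x)^2) / l) / 2"
    using integrable_on_cmult_left[OF f2, of l] integrable_on_divide[OF g2, of l]
    by (simp add: integral_add)
  finally show "integral S (\<lambda>x. f x * g x) \<le> (l * integral S (\<lambda>x. (f x)^2) + integral S (\<lambda>x. (g x)^2) / l) / 2" .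
qed

lemma integral_power2_nonneg: "integral S (\<lambda>x. (f x)^2 :: real) \<ge> 0"
  by (cases "(\<lambda>x. (f x)^2) integrable_on S") (simp_all add: integral_nonneg not_integrable_integral)

lemma Lp_norm_2_eq_sqrt: "Lp_norm 2 S f = sqrt (integral S (\<lambda>x. (f x)^2))"
proof -
  have "\<bar>t\<bar> powr 2 = t^2" for t :: real
    by (cases "t = 0") (simp_all add: powr_numeral)
  then show ?thesis
    unfolding Lp_norm_def using integral_power2_nonneg[of S f] by (simp add: powr_half_sqrt)
qed

lemma Lp_norm_4_squared: "(Lp_norm 4 S f)^2 = sqrt (integral S (\<lambda>x. (f x)^4))"
proof -
  have "\<bar>t\<bar> powr 4 = (t^2)^2" for t :: real
    by (cases "t = 0") (simp_all add: powr_numeral power_even_abs flip: power_mult)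
  then have "Lp_norm 4 S f = (integral S (\<lambda>x. ((f x)^2)^2)) powr (1/4)"
    unfolding Lp_norm_def by simp
  also have "\<dots>^2 = (integral S (\<lambda>x. ((f x)^2)^2)) powr (1/2)"
    by (simp add: power2_eq_square flip: powr_add)
  finally show ?thesis
    using integral_power2_nonneg[of S "\<lambda>x. (f x)^2"] by (simp add: powr_half_sqrt flip: power_mult)
qed

lemma integral_grad_quadratic_le:
  fixes h :: "real \<Rightarrow> real"
  assumes h_le: "\<And>a. \<bar>h a\<bar> \<le> K * a^2" and "K \<ge> 0"
    and "S' \<subseteq> S" and "S' \<in> sets lebesgue" and "bounded S" and "S \<in> sets lebesgue"
  shows "integral S' (\<lambda>x. h (grad u x) * grad v x)
           \<le> K * (Lp_norm 4 S (grad u))^2 * Lp_norm 2 S (grad v)"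
proof -
  have S': "bounded S'" "S' \<in> sets lebesgue"
    using assms(3-5) bounded_subset by blast+
  note integrable_S' = integrable_on_grad[OF S'] and integrable_S = integrable_on_grad[OF \<open>bounded S\<close> \<open>S \<in> sets lebesgue\<close>]
  have "integral S' (\<lambda>x. h (grad u x) * grad v x) \<le> integral S' (\<lambda>x. K * ((grad u x)^2 * \<bar>grad v x\<bar>))"
  proof (rule integral_le[OF integrable_S' integrable_S'])
    fix x
    have "h (grad u x) * grad v x \<le> \<bar>h (grad u x)\<bar> * \<bar>grad v x\<bar>"
      by (simp flip: abs_mult)
    also have "\<dots> \<le> K * (grad u x)^2 * \<bar>grad v x\<bar>"
      by (intro mult_right_mono h_le) simp
    finally show "h (grad u x) * grad v x \<le> K * ((grad u x)^2 * \<bar>grad v x\<bar>)"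
      by (simp add: mult.assoc)
  qed
  also have "\<dots> \<le> integral S (\<lambda>x. K * ((grad u x)^2 * \<bar>grad v x\<bar>))"
    using \<open>K \<ge> 0\<close> \<open>S' \<subseteq> S\<close> by (intro integral_subset_le integrable_S' integrable_S) auto
  also have "\<dots> = K * integral S (\<lambda>x. (grad u x)^2 * \<bar>grad v x\<bar>)"
    by simp
  also have "\<dots> \<le> K * (sqrt (integral S (\<lambda>x. ((grad u x)^2)^2)) * sqrt (integral S (\<lambda>x. \<bar>grad v x\<bar>^2)))"
    using \<open>K \<ge> 0\<close> by (intro mult_left_mono Cauchy_Schwarz_integral integrable_S)
  also have "\<dots> = K * (Lp_norm 4 S (grad u))^2 * Lp_norm 2 S (grad v)"
    by (simp add: Lp_norm_4_squared Lp_norm_2_eq_sqrt flip: power_mult)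
  finally show ?thesis .
qed

theorem theorem3p4:
  fixes V :: "real^4 \<Rightarrow> real" and F :: real and N L :: int
    and u v :: "int \<Rightarrow> real"
  assumes F_pos: "F > 0"
    and V_C3: "C3 V"
    and V_bdd: "\<And>r1 r2 r3. bdd_above (range (\<lambda>g. \<bar>d3 V r1 r2 r3 g\<bar>))"
    and LN: "L < N"
    and u_supp: "\<And>\<xi>. \<bar>\<xi>\<bar> \<ge> N \<Longrightarrow> u \<xi> = 0"
    and v_in: "v \<in> YN F N"
  shows "integral {real_of_int (-N) .. real_of_int N}
           (\<lambda>x. Tqnll V F N L (\<lambda>\<xi>. F * real_of_int \<xi> + u \<xi>) x * grad v x)
         \<le> 1/2 * M30 V * (Lp_norm 4 (Omega_l N L) (grad u))^2
             * Lp_norm 2 (Omega_l N L) (grad v)"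
proof -
  define h where "h a = deriv (WL V F) (F + a) - deriv (Wf V) (F + a)" for a
  let ?I = "{real_of_int (-N) .. real_of_int N}"
  have "Tqnll V F N L (\<lambda>\<xi>. F * real_of_int \<xi> + u \<xi>) x * grad v x
      = (if x \<in> Omega_l N L then h (grad u x) * grad v x else 0)" for x
    by (simp add: Tqnll_def grad_add_affine h_def)
  then have "integral ?I (\<lambda>x. Tqnll V F N L (\<lambda>\<xi>. F * real_of_int \<xi> + u \<xi>) x * grad v x)
      = integral (Omega_l N L \<inter> ?I) (\<lambda>x. h (grad u x) * grad v x)"
    by (simp add: integral_restrict_Int)
  also have "\<dots> \<le> 1/2 * M30 V * (Lp_norm 4 (Omega_l N L) (grad u))^2 * Lp_norm 2 (Omega_l N L) (grad v)"
  proof (rule integral_grad_quadratic_le)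
    show "\<bar>h a\<bar> \<le> 1/2 * M30 V * a^2" for a
      using abs_deriv_WL_minus_deriv_Wf_le[OF V_C3 V_bdd, of F "F + a"] by (simp add: h_def)
    show "1/2 * M30 V \<ge> 0"
      using M30_nonneg[OF V_bdd] by simp
  qed (auto simp: Omega_l_def intro!: bounded_Un)
  finally show ?thesis .
qed

end
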